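(* If $f:\{0,1\}^n\to\{0,1\}^n$ is computable by polynomial-size circuits, length-preserving, and one-to-one on $\{0,1\}^n$ for infinitely many $n$, then $f$ does not have a super-core.
   Context: A predicate $b$ computable by polynomial-size circuits is a super-core of $f:\{0,1\}^n\to\{0,1\}^{m(n)}$ if there do not exist a nondeterministic polynomial-size circuit family $\mathcal{A}_1$ (accepting iff some witness gives output 1), a co-nondeterministic polynomial-size circuit family $\mathcal{A}_2$ (rejecting iff some witness gives output 0), a polynomial $p$ and infinitely many $n$ such that either $\Pr_{x\in\{0,1\}^n}[\mathcal{A}_1(f(x),1^n)=b(x)=0]+\tfrac12\Pr_{y\in\{0,1\}^{m(n)}}[\mathcal{A}_1(y,1^n)=1]\ge \tfrac12+\tfrac1{p(n)}$ or $\Pr_{x}[\mathcal{A}_2(f(x),1^n)=b(x)=1]+\tfrac12\Pr_{y}[\mathcal{A}_2(y,1^n)=0]\ge \tfrac12+\tfrac1{p(n)}$ (uniform distributions). *)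

theory Defs
  imports Complex_Main
begin

text \<open>A circuit on input bits x_0..x_{k-1} is a list of gates. Wire i for i < k is input
bit i; the j-th gate produces wire k+j and may only refer to earlier wires (a reference
to a not-yet-defined wire reads as False, which makes the semantics total).\<close>

datatype gate = GConst bool | GNot nat | GAnd nat nat | GOr nat nat

record circuit =
  gates :: "gate list"
  outs :: "nat list"

definition wire :: "bool list \<Rightarrow> nat \<Rightarrow> bool" where
  "wire vs i = (if i < length vs then vs ! i else False)"

fun gate_val :: "bool list \<Rightarrow> gate \<Rightarrow> bool" where
  "gate_val vs (GConst b) = b"
| "gate_val vs (GNot i) = (\<not> wire vs i)"
| "gate_val vs (GAnd i j) = (wire vs i \<and> wire vs j)"
| "gate_val vs (GOr i j) = (wire vs i \<or> wire vs j)"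

fun run_gates :: "gate list \<Rightarrow> bool list \<Rightarrow> bool list" where
  "run_gates [] vs = vs"
| "run_gates (g # gs) vs = run_gates gs (vs @ [gate_val vs g])"

definition circ_eval :: "circuit \<Rightarrow> bool list \<Rightarrow> bool list" where
  "circ_eval C xs = map (wire (run_gates (gates C) xs)) (outs C)"

definition circ_eval1 :: "circuit \<Rightarrow> bool list \<Rightarrow> bool" where
  "circ_eval1 C xs = (case circ_eval C xs of [] \<Rightarrow> False | b # _ \<Rightarrow> b)"

definition circ_size :: "circuit \<Rightarrow> nat" where
  "circ_size C = length (gates C) + length (outs C)"

definition poly_bounded :: "(nat \<Rightarrow> nat) \<Rightarrow> bool" where
  "poly_bounded s \<longleftrightarrow> (\<exists>c d::nat. \<forall>n. s n \<le> c * n ^ d + c)"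

definition poly_size_family :: "(nat \<Rightarrow> circuit) \<Rightarrow> bool" where
  "poly_size_family C \<longleftrightarrow> poly_bounded (\<lambda>n. circ_size (C n))"

definition poly_circuit_fun :: "(bool list \<Rightarrow> bool list) \<Rightarrow> bool" where
  "poly_circuit_fun f \<longleftrightarrow> (\<exists>C. poly_size_family C \<and>
      (\<forall>x. circ_eval (C (length x)) x = f x))"

definition poly_circuit_pred :: "(bool list \<Rightarrow> bool) \<Rightarrow> bool" where
  "poly_circuit_pred b \<longleftrightarrow> (\<exists>C. poly_size_family C \<and>
      (\<forall>x. circ_eval1 (C (length x)) x = b x))"

definition ndet_out :: "circuit \<Rightarrow> nat \<Rightarrow> bool list \<Rightarrow> bool" where
  "ndet_out C k y \<longleftrightarrow> (\<exists>w. length w = k \<and> circ_eval1 C (y @ w))"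

definition condet_out :: "circuit \<Rightarrow> nat \<Rightarrow> bool list \<Rightarrow> bool" where
  "condet_out C k y \<longleftrightarrow> \<not> (\<exists>w. length w = k \<and> \<not> circ_eval1 C (y @ w))"

text \<open>A polynomial-size (co-)nondeterministic family: circuits A n (the n-th member,
playing the role of the auxiliary input 1^n) with witness lengths k n, both polynomially
bounded in n.\<close>
definition poly_ndet_family :: "(nat \<Rightarrow> circuit) \<Rightarrow> (nat \<Rightarrow> nat) \<Rightarrow> bool" where
  "poly_ndet_family A k \<longleftrightarrow> poly_size_family A \<and> poly_bounded k"

definition prob_bits :: "nat \<Rightarrow> (bool list \<Rightarrow> bool) \<Rightarrow> real" where
  "prob_bits n P = real (card {x::bool list. length x = n \<and> P x}) / 2 ^ n"

definition super_core ::
  "(bool list \<Rightarrow> bool) \<Rightarrow> (bool list \<Rightarrow> bool list) \<Rightarrow> (nat \<Rightarrow> nat) \<Rightarrow> bool" where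
  "super_core b f m \<longleftrightarrow> poly_circuit_pred b \<and>
     \<not> (\<exists>A1 k1 A2 k2 (p :: nat \<Rightarrow> nat).
          poly_ndet_family A1 k1 \<and> poly_ndet_family A2 k2 \<and>
          poly_bounded p \<and> (\<forall>n. p n > 0) \<and>
          infinite {n. prob_bits n (\<lambda>x. \<not> ndet_out (A1 n) (k1 n) (f x) \<and> \<not> b x)
                        + 1/2 * prob_bits (m n) (\<lambda>y. ndet_out (A1 n) (k1 n) y)
                        \<ge> 1/2 + 1 / real (p n)
                    \<or> prob_bits n (\<lambda>x. condet_out (A2 n) (k2 n) (f x) \<and> b x)
                        + 1/2 * prob_bits (m n) (\<lambda>y. \<not> condet_out (A2 n) (k2 n) y)
                        \<ge> 1/2 + 1 / real (p n)})"

end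

theory Submission
  imports Defs
begin

text \<open>A nondeterministic circuit can guess a preimage w of its input y and evaluate b w, so it
  decides exactly whether y lies in f(b\<inverse>(1)); dually, a co-nondeterministic circuit decides
  whether y avoids f(b\<inverse>(0)). When f is injective on {0,1}^n the first predictor has advantage
  Pr[b = 0] + Pr[b = 1]/2 and the second Pr[b = 1] + Pr[b = 0]/2. These add up to 3/2, so at
  every injective length one of them reaches 3/4 = 1/2 + 1/4, and b is not a super-core.
  The predictor circuits are assembled from the circuits for f and b by relocating their wires
  and appending a wire-by-wire equality check.\<close>

lemma length_run_gates: "length (run_gates gs vs) = length vs + length gs"
  by (induction gs arbitrary: vs) auto

lemma run_gates_append: "run_gates (gs @ hs) vs = run_gates hs (run_gates gs vs)"
  by (induction gs arbitrary: vs) auto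

lemma wire_append: "i < length vs \<Longrightarrow> wire (vs @ us) i = wire vs i"
  by (simp add: wire_def nth_append)

lemma wire_beyond: "length vs \<le> i \<Longrightarrow> \<not> wire vs i"
  by (simp add: wire_def)

lemma wire_run_gates_prefix: "i < length vs \<Longrightarrow> wire (run_gates gs vs) i = wire vs i"
  by (induction gs arbitrary: vs) (simp_all add: wire_append)

fun map_gate :: "(nat \<Rightarrow> nat) \<Rightarrow> gate \<Rightarrow> gate" where
  "map_gate s (GConst b) = GConst b"
| "map_gate s (GNot i) = GNot (s i)"
| "map_gate s (GAnd i j) = GAnd (s i) (s j)"
| "map_gate s (GOr i j) = GOr (s i) (s j)"

lemma gate_val_map_gate:
  "(\<And>i. wire vs (s i) = wire us i) \<Longrightarrow> gate_val vs (map_gate s g) = gate_val us g"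
  by (cases g) auto

text \<open>Relocating a circuit with n inputs: its inputs are read from the wires
  a, ..., a + n - 1 and its gates produce the wires L, L + 1, ... of a larger circuit.\<close>

definition reloc_wire :: "nat \<Rightarrow> nat \<Rightarrow> nat \<Rightarrow> nat \<Rightarrow> nat" where
  "reloc_wire a L n i = (if i < n then a + i else i + L - n)"

definition reloc_gates :: "nat \<Rightarrow> nat \<Rightarrow> nat \<Rightarrow> gate list \<Rightarrow> gate list" where
  "reloc_gates a L n = map (map_gate (reloc_wire a L n))"

lemma wire_reloc_wire_all:
  assumes "length vs + n = length us + L" "n \<le> length us"
    and "\<forall>i<length us. wire vs (reloc_wire a L n i) = wire us i"
  shows "wire vs (reloc_wire a L n i) = wire us i"
  using assms by (cases "i < length us") (auto simp: reloc_wire_def wire_beyond)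

lemma wire_run_reloc_gates_general:
  assumes "length vs + n = length us + L" "n \<le> length us" "a + n \<le> L"
    and "\<forall>i<length us. wire vs (reloc_wire a L n i) = wire us i"
  shows "wire (run_gates (reloc_gates a L n gs) vs) (reloc_wire a L n i) = wire (run_gates gs us) i"
  using assms
proof (induction gs arbitrary: vs us)
  case Nil
  then show ?case using wire_reloc_wire_all[OF Nil.prems(1,2,4)] by (simp add: reloc_gates_def)
next
  case (Cons g gs)
  define v where "v = gate_val us g"
  have val: "gate_val vs (map_gate (reloc_wire a L n) g) = v"
    unfolding v_def by (rule gate_val_map_gate, rule wire_reloc_wire_all[OF Cons.prems(1,2,4)])
  have "wire (vs @ [v]) (reloc_wire a L n i) = wire (us @ [v]) i" if "i < Suc (length us)" for i
  proof (cases "i < length us")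
    case True
    then have "reloc_wire a L n i < length vs"
      using Cons.prems(1-3) by (auto simp: reloc_wire_def)
    then show ?thesis using True Cons.prems(4) by (simp add: wire_append)
  next
    case False
    then have "i = length us" "reloc_wire a L n i = length vs"
      using that Cons.prems(1,2) by (auto simp: reloc_wire_def)
    then show ?thesis by (simp add: wire_def)
  qed
  then show ?case
    using Cons.IH[of "vs @ [v]" "us @ [v]"] Cons.prems(1-3) val
    by (simp add: reloc_gates_def v_def)
qed

lemma wire_run_reloc_gates:
  assumes "length xs = n" "length vs = L" "a + n \<le> L" "\<forall>i<n. wire vs (a + i) = xs ! i"
  shows "wire (run_gates (reloc_gates a L n gs) vs) (reloc_wire a L n i) = wire (run_gates gs xs) i"
  using assms by (intro wire_run_reloc_gates_general) (auto simp: reloc_wire_def wire_def)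

text \<open>Output wires that the circuit never defines read as False; after relocation they are
  redirected to a wire z that is constantly False in the larger circuit.\<close>

definition reloc_outs :: "nat \<Rightarrow> nat \<Rightarrow> nat \<Rightarrow> nat \<Rightarrow> circuit \<Rightarrow> nat list" where
  "reloc_outs a L n z C =
     map (\<lambda>i. if i < n + length (gates C) then reloc_wire a L n i else z) (outs C)"

lemma reloc_outs_bound:
  "a + n \<le> L \<Longrightarrow> j \<in> set (reloc_outs a L n z C) \<Longrightarrow> j < L + length (gates C) \<or> j = z"
  by (auto simp: reloc_outs_def reloc_wire_def split: if_splits)

lemma map_wire_reloc_outs:
  assumes "length xs = n" "length vs = L" "a + n \<le> L" "\<forall>i<n. wire vs (a + i) = xs ! i"
    and "\<forall>j < L + length (gates C).
           wire vs' j = wire (run_gates (reloc_gates a L n (gates C)) vs) j"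
    and "\<not> wire vs' z"
  shows "map (wire vs') (reloc_outs a L n z C) = circ_eval C xs"
proof -
  have "wire vs' (if i < n + length (gates C) then reloc_wire a L n i else z)
      = wire (run_gates (gates C) xs) i" for i
  proof (cases "i < n + length (gates C)")
    case True
    then have "reloc_wire a L n i < L + length (gates C)"
      using assms(3) by (auto simp: reloc_wire_def)
    then show ?thesis
      using True assms(5) wire_run_reloc_gates[OF assms(1-4)] by simp
  next
    case False
    then show ?thesis using assms(1,6) by (simp add: wire_beyond length_run_gates)
  qed
  then show ?thesis by (simp add: reloc_outs_def circ_eval_def)
qed

lemma wire_hd_reloc_outs:
  assumes "length xs = n" "length vs = L" "a + n \<le> L" "\<forall>i<n. wire vs (a + i) = xs ! i"
    and "\<forall>j < L + length (gates C).
           wire vs' j = wire (run_gates (reloc_gates a L n (gates C)) vs) j"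
    and "\<not> wire vs' z"
  shows "wire vs' (case reloc_outs a L n z C of [] \<Rightarrow> z | i # _ \<Rightarrow> i) = circ_eval1 C xs"
  unfolding circ_eval1_def map_wire_reloc_outs[OF assms, symmetric]
  by (cases "reloc_outs a L n z C") (simp_all add: assms(6))

text \<open>With accumulator wire a and fresh wires from L on, each pair (i, j) costs five gates:
  wire L + 3 holds (i \<and> j) \<or> \<not> (i \<or> j), that is i \<longleftrightarrow> j, and L + 4 is the new
  accumulator.\<close>

fun eq_chain_gates :: "nat \<Rightarrow> nat \<Rightarrow> (nat \<times> nat) list \<Rightarrow> gate list" where
  "eq_chain_gates L a [] = []"
| "eq_chain_gates L a ((i, j) # ps) =
     [GAnd i j, GOr i j, GNot (L + 1), GOr L (L + 2), GAnd a (L + 3)]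
     @ eq_chain_gates (L + 5) (L + 4) ps"

fun eq_chain_out :: "nat \<Rightarrow> nat \<Rightarrow> (nat \<times> nat) list \<Rightarrow> nat" where
  "eq_chain_out L a [] = a"
| "eq_chain_out L a (p # ps) = eq_chain_out (L + 5) (L + 4) ps"

lemma length_eq_chain_gates: "length (eq_chain_gates L a ps) = 5 * length ps"
  by (induction L a ps rule: eq_chain_gates.induct) auto

lemma wire_eq_chain_out:
  assumes "length vs = L" "a < L" "\<forall>(i, j)\<in>set ps. i < L \<and> j < L"
  shows "wire (run_gates (eq_chain_gates L a ps) vs) (eq_chain_out L a ps)
    \<longleftrightarrow> wire vs a \<and> (\<forall>(i, j)\<in>set ps. wire vs i = wire vs j)"
  using assms
proof (induction L a ps arbitrary: vs rule: eq_chain_gates.induct)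
  case (1 L a)
  then show ?case by simp
next
  case (2 L a i j ps)
  define vs' where "vs' = run_gates [GAnd i j, GOr i j, GNot (L + 1), GOr L (L + 2), GAnd a (L + 3)] vs"
  have len: "length vs' = L + 5"
    using 2 by (simp add: vs'_def)
  have prefix: "k < L \<Longrightarrow> wire vs' k = wire vs k" for k
    unfolding vs'_def by (rule wire_run_gates_prefix) (use 2(2) in simp)
  have acc: "wire vs' (L + 4) \<longleftrightarrow> wire vs a \<and> wire vs i = wire vs j"
    using 2 by (auto simp: vs'_def wire_def nth_append)
  have "wire (run_gates (eq_chain_gates (L + 5) (L + 4) ps) vs') (eq_chain_out (L + 5) (L + 4) ps)
    \<longleftrightarrow> wire vs' (L + 4) \<and> (\<forall>(i, j)\<in>set ps. wire vs' i = wire vs' j)"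
    using 2(1)[OF len] 2(4) by fastforce
  moreover have "(\<forall>(i, j)\<in>set ps. wire vs' i = wire vs' j) \<longleftrightarrow> (\<forall>(i, j)\<in>set ps. wire vs i = wire vs j)"
    using 2(4) prefix by fastforce
  ultimately show ?case using acc by (simp add: run_gates_append vs'_def)
qed

lemma ball_zip_eq_iff_map_eq:
  "length xs = length ys \<Longrightarrow> (\<forall>(i, j)\<in>set (zip xs ys). g i = g j) \<longleftrightarrow> map g xs = map g ys"
  by (induction xs ys rule: list_induct2) auto

definition lit_gate :: "bool \<Rightarrow> nat \<Rightarrow> gate" where
  "lit_gate pol i = (if pol then GAnd i i else GNot i)"

lemma gate_val_lit_gate: "gate_val vs (lit_gate pol i) \<longleftrightarrow> (wire vs i \<longleftrightarrow> pol)"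
  by (simp add: lit_gate_def)

text \<open>On input y @ w with |y| = |w| = n, the verifier runs F and B on the witness w, reserves
  wire L = verifier_false_wire F B n as the constant False, stores the literal
  (B w \<longleftrightarrow> pol) on wire L + 1, checks F w = y wire by wire, and outputs the literal
  ((B w \<longleftrightarrow> pol) \<and> F w = y \<longleftrightarrow> pol).\<close>

definition verifier_false_wire :: "circuit \<Rightarrow> circuit \<Rightarrow> nat \<Rightarrow> nat" where
  "verifier_false_wire F B n = 2 * n + length (gates F) + length (gates B)"

definition verifier_f_outs :: "circuit \<Rightarrow> circuit \<Rightarrow> nat \<Rightarrow> nat list" where
  "verifier_f_outs F B n = reloc_outs n (2 * n) n (verifier_false_wire F B n) F"

definition verifier_b_out :: "circuit \<Rightarrow> circuit \<Rightarrow> nat \<Rightarrow> nat" where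
  "verifier_b_out F B n =
     (case reloc_outs n (2 * n + length (gates F)) n (verifier_false_wire F B n) B of
        [] \<Rightarrow> verifier_false_wire F B n
      | i # _ \<Rightarrow> i)"

definition verifier_prefix_gates :: "bool \<Rightarrow> circuit \<Rightarrow> circuit \<Rightarrow> nat \<Rightarrow> gate list" where
  "verifier_prefix_gates pol F B n =
     reloc_gates n (2 * n) n (gates F) @ reloc_gates n (2 * n + length (gates F)) n (gates B)
     @ [GConst False, lit_gate pol (verifier_b_out F B n)]"

definition verifier :: "bool \<Rightarrow> circuit \<Rightarrow> circuit \<Rightarrow> nat \<Rightarrow> circuit" where
  "verifier pol F B n =
     (let L = verifier_false_wire F B n; ps = zip [0..<n] (verifier_f_outs F B n) in
      \<lparr>gates = verifier_prefix_gates pol F B n @ eq_chain_gates (L + 2) (L + 1) ps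
               @ [lit_gate pol (eq_chain_out (L + 2) (L + 1) ps)],
       outs = [L + 2 + 5 * length ps]\<rparr>)"

lemma circ_size_verifier:
  "circ_size (verifier pol F B n) \<le> circ_size F + circ_size B + (5 * n + 4)"
  by (simp add: verifier_def Let_def verifier_prefix_gates_def reloc_gates_def circ_size_def
      length_eq_chain_gates)

lemma wires_verifier_prefix:
  fixes pol :: bool and F B :: circuit
  assumes "length y = n" "length w = n"
  defines "vs \<equiv> run_gates (verifier_prefix_gates pol F B n) (y @ w)"
    and "L \<equiv> verifier_false_wire F B n"
  shows "length vs = L + 2"
    and "map (wire vs) [0..<n] = y"
    and "map (wire vs) (verifier_f_outs F B n) = circ_eval F w"
    and "wire vs (L + 1) \<longleftrightarrow> (circ_eval1 B w \<longleftrightarrow> pol)"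
proof -
  define G where "G = length (gates F)"
  define vs1 where "vs1 = run_gates (reloc_gates n (2 * n) n (gates F)) (y @ w)"
  define vs2 where "vs2 = run_gates (reloc_gates n (2 * n + G) n (gates B)) vs1"
  have len1: "length vs1 = 2 * n + G"
    using assms(1,2) by (simp add: vs1_def G_def length_run_gates reloc_gates_def)
  have len2: "length vs2 = L"
    using len1 by (simp add: vs2_def L_def verifier_false_wire_def G_def length_run_gates
        reloc_gates_def)
  have vs: "vs = vs2 @ [False, gate_val (vs2 @ [False]) (lit_gate pol (verifier_b_out F B n))]"
    by (simp add: vs_def vs2_def vs1_def G_def verifier_prefix_gates_def run_gates_append)
  show "length vs = L + 2"
    using len2 by (simp add: vs)
  have input: "wire (y @ w) (n + i) = w ! i" "wire vs1 (n + i) = w ! i" if "i < n" for i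
    using that assms(1,2) wire_run_gates_prefix[of "n + i" "y @ w"]
    by (simp_all add: wire_def nth_append vs1_def)
  have false_wire: "\<not> wire vs L" "\<not> wire (vs2 @ [False]) L"
    using len2 by (simp_all add: vs wire_def nth_append)
  have prefix2: "wire vs j = wire vs2 j" if "j < L" for j
    using that len2 by (simp add: vs wire_append)
  have prefix1: "wire vs j = wire vs1 j" if "j < 2 * n + G" for j
    using that len1 prefix2[of j] wire_run_gates_prefix[of j vs1]
    by (simp add: vs2_def L_def verifier_false_wire_def G_def)
  show "map (wire vs) [0..<n] = y"
    using assms(1,2) prefix1 wire_run_gates_prefix[of _ "y @ w"]
    by (simp add: list_eq_iff_nth_eq vs1_def wire_def nth_append)
  show "map (wire vs) (verifier_f_outs F B n) = circ_eval F w"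
    unfolding verifier_f_outs_def L_def[symmetric]
    by (rule map_wire_reloc_outs) (use assms(1,2) input prefix1 false_wire in \<open>auto simp: G_def vs1_def\<close>)
  have "wire (vs2 @ [False]) (verifier_b_out F B n) = circ_eval1 B w"
    unfolding verifier_b_out_def L_def[symmetric] G_def[symmetric]
  proof (rule wire_hd_reloc_outs)
    show "\<forall>j < 2 * n + G + length (gates B).
        wire (vs2 @ [False]) j = wire (run_gates (reloc_gates n (2 * n + G) n (gates B)) vs1) j"
      unfolding vs2_def[symmetric] using len2
      by (simp add: wire_append L_def verifier_false_wire_def G_def)
  qed (use assms(2) len1 input false_wire in auto)
  then show "wire vs (L + 1) \<longleftrightarrow> (circ_eval1 B w \<longleftrightarrow> pol)"
    using len2 by (simp add: vs wire_def nth_append gate_val_lit_gate)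
qed

lemma circ_eval1_verifier:
  assumes "length (outs F) = n" "length y = n" "length w = n"
  shows "circ_eval1 (verifier pol F B n) (y @ w)
    \<longleftrightarrow> ((circ_eval1 B w \<longleftrightarrow> pol) \<and> circ_eval F w = y \<longleftrightarrow> pol)"
proof -
  define L where "L = verifier_false_wire F B n"
  define fo where "fo = verifier_f_outs F B n"
  define ps where "ps = zip [0..<n] fo"
  define acc where "acc = eq_chain_out (L + 2) (L + 1) ps"
  define vs where "vs = run_gates (verifier_prefix_gates pol F B n) (y @ w)"
  define vs' where "vs' = run_gates (eq_chain_gates (L + 2) (L + 1) ps) vs"
  note prefix = wires_verifier_prefix[OF assms(2,3), of pol F B, folded vs_def L_def fo_def]
  have len_fo: "length fo = n"
    using assms(1) by (simp add: fo_def verifier_f_outs_def reloc_outs_def)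
  have "j < L + 2" if "j \<in> set fo" for j
    using reloc_outs_bound[of n n "2 * n"] that
    by (fastforce simp: fo_def verifier_f_outs_def L_def verifier_false_wire_def)
  then have bounds: "\<forall>(i, j)\<in>set ps. i < L + 2 \<and> j < L + 2"
    by (auto simp: ps_def L_def verifier_false_wire_def dest: set_zip_leftD set_zip_rightD)
  have chain: "wire vs' acc \<longleftrightarrow> (circ_eval1 B w \<longleftrightarrow> pol) \<and> circ_eval F w = y"
    using wire_eq_chain_out[OF prefix(1) _ bounds] prefix(2-4) len_fo
    by (auto simp: vs'_def acc_def ps_def ball_zip_eq_iff_map_eq)
  have "length vs' = L + 2 + 5 * length ps"
    using prefix(1) by (simp add: vs'_def length_run_gates length_eq_chain_gates)
  then have "outs (verifier pol F B n) = [length vs']"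
    by (simp add: verifier_def Let_def L_def ps_def fo_def)
  moreover have "run_gates (gates (verifier pol F B n)) (y @ w) = vs' @ [gate_val vs' (lit_gate pol acc)]"
    by (simp add: verifier_def Let_def run_gates_append vs'_def vs_def acc_def ps_def fo_def L_def)
  ultimately have "circ_eval1 (verifier pol F B n) (y @ w) = gate_val vs' (lit_gate pol acc)"
    by (simp add: circ_eval1_def circ_eval_def wire_def)
  then show ?thesis
    using chain by (simp add: gate_val_lit_gate)
qed

lemma length_outs_computing:
  "\<forall>x. circ_eval (F (length x)) x = f x \<Longrightarrow> \<forall>x. length (f x) = length x
   \<Longrightarrow> length (outs (F n)) = n"
  by (metis circ_eval_def length_map length_replicate)

lemma ndet_out_verifier:
  assumes "\<forall>x. circ_eval (F (length x)) x = f x" "\<forall>x. length (f x) = length x"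
    and "\<forall>x. circ_eval1 (B (length x)) x = b x" "length y = n"
  shows "ndet_out (verifier True (F n) (B n) n) n y \<longleftrightarrow> (\<exists>w. length w = n \<and> b w \<and> f w = y)"
proof -
  have len: "length (outs (F n)) = n"
    using assms(1,2) by (rule length_outs_computing)
  have "circ_eval1 (verifier True (F n) (B n) n) (y @ w) \<longleftrightarrow> b w \<and> f w = y"
    if "length w = n" for w
    using circ_eval1_verifier[OF len assms(4) that, of True "B n"] assms(1,3)[rule_format, of w] that
    by simp
  then show ?thesis
    unfolding ndet_out_def by blast
qed

lemma condet_out_verifier:
  assumes "\<forall>x. circ_eval (F (length x)) x = f x" "\<forall>x. length (f x) = length x"
    and "\<forall>x. circ_eval1 (B (length x)) x = b x" "length y = n"
  shows "condet_out (verifier False (F n) (B n) n) n y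
    \<longleftrightarrow> \<not> (\<exists>w. length w = n \<and> \<not> b w \<and> f w = y)"
proof -
  have len: "length (outs (F n)) = n"
    using assms(1,2) by (rule length_outs_computing)
  have "circ_eval1 (verifier False (F n) (B n) n) (y @ w) \<longleftrightarrow> \<not> (\<not> b w \<and> f w = y)"
    if "length w = n" for w
    using circ_eval1_verifier[OF len assms(4) that, of False "B n"] assms(1,3)[rule_format, of w] that
    by simp
  then show ?thesis
    unfolding condet_out_def by blast
qed

lemma poly_bounded_mono: "(\<And>n. s n \<le> t n) \<Longrightarrow> poly_bounded t \<Longrightarrow> poly_bounded s"
  unfolding poly_bounded_def by (meson le_trans)

lemma poly_bounded_add:
  assumes "poly_bounded s" "poly_bounded t"
  shows "poly_bounded (\<lambda>n. s n + t n)"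
proof -
  obtain c d e g where s: "\<And>n. s n \<le> c * n ^ d + c" and t: "\<And>n. t n \<le> e * n ^ g + e"
    using assms unfolding poly_bounded_def by blast
  have pow: "n ^ k \<le> n ^ (d + g) + 1" if "k \<le> d + g" for n k :: nat
    using that by (cases "n = 0") (simp_all add: power_0_left le_SucI power_increasing)
  have "s n + t n \<le> 2 * (c + e) * n ^ (d + g) + 2 * (c + e)" for n
  proof -
    have "c * n ^ d \<le> c * (n ^ (d + g) + 1)" "e * n ^ g \<le> e * (n ^ (d + g) + 1)"
      by (intro mult_le_mono2 pow; simp)+
    then show ?thesis
      using s[of n] t[of n] by (simp add: algebra_simps)
  qed
  then show ?thesis
    unfolding poly_bounded_def by blast
qed

lemma poly_bounded_linear: "poly_bounded (\<lambda>n. c * n + d)"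
  unfolding poly_bounded_def by (rule exI[of _ "c + d"], rule exI[of _ 1]) (simp add: algebra_simps)

lemma poly_size_verifier:
  assumes "poly_size_family F" "poly_size_family B"
  shows "poly_size_family (\<lambda>n. verifier pol (F n) (B n) n)"
proof -
  have "poly_bounded (\<lambda>n. (circ_size (F n) + circ_size (B n)) + (5 * n + 4))"
    using assms by (intro poly_bounded_add poly_bounded_linear) (simp_all add: poly_size_family_def)
  then show ?thesis
    unfolding poly_size_family_def
    by (rule poly_bounded_mono[rotated]) (rule circ_size_verifier)
qed

lemma prob_bits_cong: "(\<And>x. length x = n \<Longrightarrow> P x = Q x) \<Longrightarrow> prob_bits n P = prob_bits n Q"
  unfolding prob_bits_def by (metis (mono_tags, lifting) Collect_cong)

lemma prob_bits_not: "prob_bits n (\<lambda>x. \<not> P x) = 1 - prob_bits n P"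
proof -
  have fin: "finite {x :: bool list. length x = n}"
    using finite_lists_length_eq[of "UNIV :: bool set" n] by simp
  have "card {x. length x = n \<and> \<not> P x} + card {x :: bool list. length x = n \<and> P x}
      = card {x :: bool list. length x = n}"
    by (subst card_Un_disjoint[symmetric]) (auto intro: finite_subset[OF _ fin] arg_cong[where f = card])
  moreover have "card {x :: bool list. length x = n} = 2 ^ n"
    using card_lists_length_eq[of "UNIV :: bool set" n] by simp
  ultimately show ?thesis
    unfolding prob_bits_def by (simp add: field_simps flip: of_nat_add)
qed

lemma prob_bits_image_inj:
  assumes "inj_on f {x. length x = n}" "\<forall>x. length (f x) = length x"
  shows "prob_bits n (\<lambda>y. \<exists>w. length w = n \<and> P w \<and> f w = y) = prob_bits n P"
proof -
  have "{y. length y = n \<and> (\<exists>w. length w = n \<and> P w \<and> f w = y)} = f ` {w. length w = n \<and> P w}"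
    using assms(2) by auto
  moreover have "card (f ` {w. length w = n \<and> P w}) = card {w. length w = n \<and> P w}"
    by (rule card_image, rule inj_on_subset[OF assms(1)]) auto
  ultimately show ?thesis
    unfolding prob_bits_def by simp
qed

lemma witness_guessing_prob:
  assumes "inj_on f {x. length x = n}" "\<forall>x. length (f x) = length x"
  shows "prob_bits n (\<lambda>x. \<not> (\<exists>w. length w = n \<and> P w \<and> f w = f x) \<and> \<not> P x)
      + 1/2 * prob_bits n (\<lambda>y. \<exists>w. length w = n \<and> P w \<and> f w = y)
    = 1 - 1/2 * prob_bits n P"
proof -
  have "(\<exists>w. length w = n \<and> P w \<and> f w = f x) \<longleftrightarrow> P x" if "length x = n" for x
    using assms(1) that unfolding inj_on_def by blast
  then have "prob_bits n (\<lambda>x. \<not> (\<exists>w. length w = n \<and> P w \<and> f w = f x) \<and> \<not> P x)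
      = prob_bits n (\<lambda>x. \<not> P x)"
    by (intro prob_bits_cong) auto
  then show ?thesis
    using prob_bits_image_inj[OF assms] prob_bits_not[of n P] by simp
qed

lemma not_super_core_if_witness_verifiers:
  assumes "poly_ndet_family A1 k" "poly_ndet_family A2 k" "infinite N"
    and "\<forall>n\<in>N. inj_on f {x. length x = n}" "\<forall>x. length (f x) = length x"
    and "\<forall>n\<in>N. \<forall>y. length y = n \<longrightarrow>
           ndet_out (A1 n) (k n) y = (\<exists>w. length w = n \<and> b w \<and> f w = y)"
    and "\<forall>n\<in>N. \<forall>y. length y = n \<longrightarrow>
           condet_out (A2 n) (k n) y = (\<not> (\<exists>w. length w = n \<and> \<not> b w \<and> f w = y))"
  shows "\<not> super_core b f (\<lambda>n. n)"
proof -
  define adv1 where "adv1 n = prob_bits n (\<lambda>x. \<not> ndet_out (A1 n) (k n) (f x) \<and> \<not> b x)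
      + 1/2 * prob_bits n (\<lambda>y. ndet_out (A1 n) (k n) y)" for n
  define adv2 where "adv2 n = prob_bits n (\<lambda>x. condet_out (A2 n) (k n) (f x) \<and> b x)
      + 1/2 * prob_bits n (\<lambda>y. \<not> condet_out (A2 n) (k n) y)" for n
  have adv: "adv1 n = 1 - 1/2 * prob_bits n b" "adv2 n = 1 - 1/2 * prob_bits n (\<lambda>x. \<not> b x)"
    if "n \<in> N" for n
  proof -
    have inj: "inj_on f {x. length x = n}"
      using assms(4) that by blast
    show "adv1 n = 1 - 1/2 * prob_bits n b"
      using witness_guessing_prob[OF inj assms(5), of b]
        prob_bits_cong[of n "\<lambda>x. \<not> ndet_out (A1 n) (k n) (f x) \<and> \<not> b x"]
        prob_bits_cong[of n "ndet_out (A1 n) (k n)"] assms(5,6) that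
      by (simp add: adv1_def)
    show "adv2 n = 1 - 1/2 * prob_bits n (\<lambda>x. \<not> b x)"
      using witness_guessing_prob[OF inj assms(5), of "\<lambda>x. \<not> b x"]
        prob_bits_cong[of n "\<lambda>x. condet_out (A2 n) (k n) (f x) \<and> b x"]
        prob_bits_cong[of n "\<lambda>y. \<not> condet_out (A2 n) (k n) y"] assms(5,7) that
      by (simp add: adv2_def)
  qed
  have "adv1 n + adv2 n = 3/2" if "n \<in> N" for n
    using adv[OF that] prob_bits_not[of n b] by (simp add: field_simps)
  then have "N \<subseteq> {n. adv1 n \<ge> 1/2 + 1 / real 4 \<or> adv2 n \<ge> 1/2 + 1 / real 4}"
    by fastforce
  then have "infinite {n. adv1 n \<ge> 1/2 + 1 / real 4 \<or> adv2 n \<ge> 1/2 + 1 / real 4}"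
    using assms(3) infinite_super by blast
  moreover have "poly_bounded (\<lambda>n. 4)"
    using poly_bounded_linear[of 0 4] by simp
  ultimately have "\<exists>p :: nat \<Rightarrow> nat. poly_bounded p \<and> (\<forall>n. p n > 0)
      \<and> infinite {n. adv1 n \<ge> 1/2 + 1 / real (p n) \<or> adv2 n \<ge> 1/2 + 1 / real (p n)}"
    by (intro exI[of _ "\<lambda>n. 4"]) simp
  then show ?thesis
    using assms(1,2) unfolding super_core_def adv1_def adv2_def by blast
qed

theorem corollary6p8:
  fixes f :: "bool list \<Rightarrow> bool list"
  assumes "poly_circuit_fun f"
    and "\<forall>x. length (f x) = length x"
    and "infinite {n. inj_on f {x. length x = n}}"
  shows "\<not> (\<exists>b. super_core b f (\<lambda>n. n))"
proof
  assume "\<exists>b. super_core b f (\<lambda>n. n)"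
  then obtain b where core: "super_core b f (\<lambda>n. n)" ..
  then obtain B where B: "poly_size_family B" "\<forall>x. circ_eval1 (B (length x)) x = b x"
    unfolding super_core_def poly_circuit_pred_def by blast
  obtain F where F: "poly_size_family F" "\<forall>x. circ_eval (F (length x)) x = f x"
    using assms(1) unfolding poly_circuit_fun_def by blast
  have family: "poly_ndet_family (\<lambda>n. verifier pol (F n) (B n) n) (\<lambda>n. n)" for pol
    using poly_size_verifier[OF F(1) B(1)] poly_bounded_linear[of 1 0]
    by (simp add: poly_ndet_family_def)
  have "\<not> super_core b f (\<lambda>n. n)"
    by (rule not_super_core_if_witness_verifiers
        [OF family[of True] family[of False] assms(3) _ assms(2)])
      (simp_all add: ndet_out_verifier[OF F(2) assms(2) B(2)]
        condet_out_verifier[OF F(2) assms(2) B(2)])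
  with core show False by contradiction
qed

end
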